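(* Let $q=2^m$ and let $f:\mathbb{F}_q\to\mathbb{F}_q$ be a function. The following two properties are equivalent: (i) there exist $\alpha,\beta\in\mathbb{F}_q$ and six distinct elements $x_0,x_1,x_2,x_3,x_4,x_5\in\mathbb{F}_q$ such that $$x_0+x_1=\alpha,\ f(x_0)+f(x_1)=\beta;\quad x_2+x_3=\alpha,\ f(x_2)+f(x_3)=\beta;\quad x_4+x_5=\alpha,\ f(x_4)+f(x_5)=\beta;$$ (ii) there exist four distinct elements $x_0,x_1,x_2,x_4\in\mathbb{F}_q$ with $x_0+x_1+x_2+x_4\neq 0$ such that $$f(x_0)+f(x_1)+f(x_2)+f(x_0+x_1+x_2)=0\quad\text{and}\quad f(x_0)+f(x_1)+f(x_4)+f(x_0+x_1+x_4)=0.$$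
   Context: $\mathbb{F}_q$ denotes the finite field with $q=2^m$ elements (characteristic 2). *)

theory Defs
  imports Main
begin

end

theory Submission
  imports Defs
begin

text \<open>In characteristic 2 every element is its own negative, so a pair \<open>{x, y}\<close> with
  \<open>x + y = \<alpha>\<close> is determined by either of its members: \<open>y = \<alpha> + x\<close>. Hence in (i) the
  pairs \<open>{x2, x3}\<close> and \<open>{x4, x5}\<close> are determined by \<open>x2\<close> and \<open>x4\<close>, namely
  \<open>x3 = x0 + x1 + x2\<close> and \<open>x5 = x0 + x1 + x4\<close>, and the condition on \<open>\<beta>\<close> becomes
  the vanishing of the two four-term sums in (ii). The six points are then distinct exactly
  when \<open>x0, x1, x2, x4\<close> are distinct and \<open>x3 \<noteq> x4\<close>, i.e. \<open>x0 + x1 + x2 + x4 \<noteq> 0\<close>.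
  Only the characteristic matters.\<close>

lemma add_self_eq_zero_if_CHAR_2:
  assumes "CHAR('a::semiring_1) = 2"
  shows "(x::'a) + x = 0"
proof -
  have "(2::'a) = 0"
    using of_nat_CHAR[where 'a = 'a] assms by simp
  then show ?thesis
    by (metis mult_2 mult_zero_left)
qed

lemma add_eq_zero_iff_eq_char_2:
  assumes "\<And>x::'a::ab_group_add. x + x = 0"
  shows "(a::'a) + b = 0 \<longleftrightarrow> a = b"
  by (metis assms add_right_cancel)

lemma add_eq_iff_eq_add_char_2:
  assumes "\<And>x::'a::ab_group_add. x + x = 0"
  shows "(x::'a) + y = z \<longleftrightarrow> y = z + x"
  by (metis assms add.commute add.left_commute add_0_right)

lemma add_eq_add_iff_sum_eq_zero_char_2:
  assumes "\<And>x::'a::ab_group_add. x + x = 0"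
  shows "(c::'a) + d = a + b \<longleftrightarrow> a + b + c + d = 0"
  using add_eq_zero_iff_eq_char_2[OF assms, of "a + b" "c + d"]
  by (auto simp: add.assoc)

lemma distinct_six_iff_char_2:
  assumes add_self: "\<And>x::'a::ab_group_add. x + x = 0"
  shows "distinct [x0, x1, x2, x0 + x1 + x2, x4, x0 + x1 + x4 :: 'a] \<longleftrightarrow>
     distinct [x0, x1, x2, x4] \<and> x0 + x1 + x2 + x4 \<noteq> 0"
proof -
  have cancel: "\<And>x y::'a. x + (x + y) = y"
    by (metis add_self add.assoc add_0)
  \<comment> \<open>Write every equation as a vanishing sum, in which repeated summands cancel.\<close>
  show ?thesis
    unfolding distinct.simps list.set insert_iff empty_iff
    apply (subst (1 2 3 4 5 6 7 8 9 10 11 12 13 14 15 16)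
        add_eq_zero_iff_eq_char_2[OF add_self, symmetric])
    apply (simp add: ac_simps add_self cancel add_eq_zero_iff_eq_char_2[OF add_self])
    done
qed

theorem three_colliding_pairs_iff_char_2:
  fixes f :: "'a::ab_group_add \<Rightarrow> 'b::ab_group_add"
  assumes add_self: "\<And>x::'a. x + x = 0"
    and add_self': "\<And>y::'b. y + y = 0"
  shows "(\<exists>\<alpha> \<beta> x0 x1 x2 x3 x4 x5.
            distinct [x0, x1, x2, x3, x4, x5] \<and>
            x0 + x1 = \<alpha> \<and> f x0 + f x1 = \<beta> \<and>
            x2 + x3 = \<alpha> \<and> f x2 + f x3 = \<beta> \<and>
            x4 + x5 = \<alpha> \<and> f x4 + f x5 = \<beta>)
     \<longleftrightarrow>
         (\<exists>x0 x1 x2 x4.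
            distinct [x0, x1, x2, x4] \<and> x0 + x1 + x2 + x4 \<noteq> 0 \<and>
            f x0 + f x1 + f x2 + f (x0 + x1 + x2) = 0 \<and>
            f x0 + f x1 + f x4 + f (x0 + x1 + x4) = 0)"
    (is "?pairs \<longleftrightarrow> ?quadruples")
proof
  assume ?pairs
  then obtain x0 x1 x2 x3 x4 x5 where distinct: "distinct [x0, x1, x2, x3, x4, x5]"
    and "x2 + x3 = x0 + x1" "f x2 + f x3 = f x0 + f x1"
    and "x4 + x5 = x0 + x1" "f x4 + f x5 = f x0 + f x1"
    by metis
  then have "x3 = x0 + x1 + x2" "x5 = x0 + x1 + x4"
    and "f x0 + f x1 + f x2 + f x3 = 0" "f x0 + f x1 + f x4 + f x5 = 0"
    by (simp_all add: add_eq_iff_eq_add_char_2[OF add_self]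
        add_eq_add_iff_sum_eq_zero_char_2[OF add_self'])
  with distinct show ?quadruples
    by (metis distinct_six_iff_char_2[OF add_self])
next
  assume ?quadruples
  then obtain x0 x1 x2 x4 where "distinct [x0, x1, x2, x4]" "x0 + x1 + x2 + x4 \<noteq> 0"
    and f_sum2: "f x0 + f x1 + f x2 + f (x0 + x1 + x2) = 0"
    and f_sum4: "f x0 + f x1 + f x4 + f (x0 + x1 + x4) = 0"
    by blast
  then have "distinct [x0, x1, x2, x0 + x1 + x2, x4, x0 + x1 + x4]"
    by (subst distinct_six_iff_char_2[OF add_self]) blast
  moreover have "x2 + (x0 + x1 + x2) = x0 + x1" "x4 + (x0 + x1 + x4) = x0 + x1"
    by (simp_all add: add_eq_iff_eq_add_char_2[OF add_self, of _ _ "x0 + x1"])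
  moreover have "f x2 + f (x0 + x1 + x2) = f x0 + f x1" "f x4 + f (x0 + x1 + x4) = f x0 + f x1"
    using f_sum2 f_sum4 by (simp_all only: add_eq_add_iff_sum_eq_zero_char_2[OF add_self'])
  ultimately show ?pairs
    by blast
qed

theorem lemma2p1:
  fixes f :: "'a::{field,finite} \<Rightarrow> 'a" and m :: nat
  assumes "card (UNIV :: 'a set) = 2 ^ m"
    and "CHAR('a) = 2"
  shows "(\<exists>\<alpha> \<beta> x0 x1 x2 x3 x4 x5.
            distinct [x0, x1, x2, x3, x4, x5] \<and>
            x0 + x1 = \<alpha> \<and> f x0 + f x1 = \<beta> \<and>
            x2 + x3 = \<alpha> \<and> f x2 + f x3 = \<beta> \<and>
            x4 + x5 = \<alpha> \<and> f x4 + f x5 = \<beta>)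
     \<longleftrightarrow>
         (\<exists>x0 x1 x2 x4.
            distinct [x0, x1, x2, x4] \<and> x0 + x1 + x2 + x4 \<noteq> 0 \<and>
            f x0 + f x1 + f x2 + f (x0 + x1 + x2) = 0 \<and>
            f x0 + f x1 + f x4 + f (x0 + x1 + x4) = 0)"
  by (rule three_colliding_pairs_iff_char_2; rule add_self_eq_zero_if_CHAR_2[OF assms(2)])

end
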